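(* Let $T\in B(H)$ with $T\ge0$, and let $(\lambda_k)_{k=1}^\infty\subset\operatorname{Int}_{\mathbb R}W_{\rm e}(T)$ with $(\lambda_k)_{k=1}^\infty\in\mathcal D(T)$. Then $\sum_{k=1}^\infty\lambda_k=\infty$.
   Context: $H$ is an infinite-dimensional complex separable Hilbert space. $W_{\rm e}(T)$ is the set of $\lambda\in\mathbb C$ with $\langle Tx_k,x_k\rangle\to\lambda$ for some orthonormal sequence $(x_k)$ (a subset of $\mathbb R$ for selfadjoint $T$); $\operatorname{Int}_{\mathbb R}$ is interior in $\mathbb R$. $\mathcal D(T)$ is the set of sequences $(\langle Tu_k,u_k\rangle)_{k\ge1}$ over orthonormal bases $(u_k)$ of $H$. *)

theory Defs
  imports "HOL-Analysis.Analysis"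
begin

text \<open>Model of the Hilbert space H: every infinite-dimensional complex separable
Hilbert space is unitarily isomorphic to l2(N), so we work on the concrete space
of square-summable complex sequences.\<close>

definition l2 :: "(nat \<Rightarrow> complex) set" where
  "l2 = {x. summable (\<lambda>n. (cmod (x n))\<^sup>2)}"

definition l2_inner :: "(nat \<Rightarrow> complex) \<Rightarrow> (nat \<Rightarrow> complex) \<Rightarrow> complex" where
  "l2_inner x y = (\<Sum>n. x n * cnj (y n))"

definition l2_norm :: "(nat \<Rightarrow> complex) \<Rightarrow> real" where
  "l2_norm x = sqrt (\<Sum>n. (cmod (x n))\<^sup>2)"

text \<open>T in B(H): a bounded linear operator on l2 (values outside l2 are irrelevant).\<close>
definition bounded_op :: "((nat \<Rightarrow> complex) \<Rightarrow> (nat \<Rightarrow> complex)) \<Rightarrow> bool" where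
  "bounded_op T \<longleftrightarrow>
     (\<forall>x\<in>l2. T x \<in> l2) \<and>
     (\<forall>x\<in>l2. \<forall>y\<in>l2. T (\<lambda>n. x n + y n) = (\<lambda>n. T x n + T y n)) \<and>
     (\<forall>x\<in>l2. \<forall>c. T (\<lambda>n. c * x n) = (\<lambda>n. c * T x n)) \<and>
     (\<exists>C. \<forall>x\<in>l2. l2_norm (T x) \<le> C * l2_norm x)"

definition positive_op :: "((nat \<Rightarrow> complex) \<Rightarrow> (nat \<Rightarrow> complex)) \<Rightarrow> bool" where
  "positive_op T \<longleftrightarrow> (\<forall>x\<in>l2. l2_inner (T x) x \<in> \<real> \<and> 0 \<le> Re (l2_inner (T x) x))"

definition l2_orthonormal :: "(nat \<Rightarrow> (nat \<Rightarrow> complex)) \<Rightarrow> bool" where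
  "l2_orthonormal u \<longleftrightarrow> (\<forall>k. u k \<in> l2) \<and>
     (\<forall>j k. l2_inner (u j) (u k) = (if j = k then 1 else 0))"

definition l2_onb :: "(nat \<Rightarrow> (nat \<Rightarrow> complex)) \<Rightarrow> bool" where
  "l2_onb u \<longleftrightarrow> l2_orthonormal u \<and>
     (\<forall>x\<in>l2. (\<forall>k. l2_inner x (u k) = 0) \<longrightarrow> x = (\<lambda>n. 0))"

definition ess_num_range :: "((nat \<Rightarrow> complex) \<Rightarrow> (nat \<Rightarrow> complex)) \<Rightarrow> complex set" where
  "ess_num_range T = {z. \<exists>x. l2_orthonormal x \<and>
      (\<lambda>k. l2_inner (T (x k)) (x k)) \<longlonglongrightarrow> z}"

definition diagonals :: "((nat \<Rightarrow> complex) \<Rightarrow> (nat \<Rightarrow> complex)) \<Rightarrow> (nat \<Rightarrow> complex) set" where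
  "diagonals T = {d. \<exists>u. l2_onb u \<and> d = (\<lambda>k. l2_inner (T (u k)) (u k))}"

end

theory Submission
  imports Defs
begin

text \<open>For positive \<open>T\<close> the essential numerical range lies in \<open>[0, \<infinity>)\<close>, so every
  \<open>\<lambda>\<^sub>k\<close> in its interior is strictly positive and \<open>\<lambda>\<^sub>1 \<in> W\<^sub>e(T)\<close> is nonzero.
  Suppose \<open>\<Sum> \<lambda>\<^sub>k < \<infinity>\<close>, where \<open>\<lambda>\<^sub>k = \<langle>T u\<^sub>k, u\<^sub>k\<rangle>\<close> for an orthonormal basis \<open>(u\<^sub>k)\<close>.
  By Parseval \<open>\<langle>T x, x\<rangle> = \<Sum>\<^sub>k \<langle>T x, u\<^sub>k\<rangle> \<langle>u\<^sub>k, x\<rangle>\<close>, and Cauchy-Schwarz for the positive form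
  gives \<open>|\<langle>T x, u\<^sub>k\<rangle>|\<^sup>2 \<le> \<langle>T x, x\<rangle> \<lambda>\<^sub>k\<close>. Along an orthonormal sequence \<open>x\<^sub>n\<close> the first
  \<open>N\<close> terms vanish in the limit because \<open>x\<^sub>n\<close> tends weakly to zero, while the remaining terms
  are small uniformly in \<open>n\<close> by AM-GM and Bessel's inequality. Hence \<open>\<langle>T x\<^sub>n, x\<^sub>n\<rangle> \<rightarrow> 0\<close>,
  i.e. \<open>W\<^sub>e(T) \<subseteq> {0}\<close>, a contradiction.\<close>

section \<open>The Hilbert space structure of l2\<close>

lemma summable_norm_mult_if_square_summable:
  fixes f g :: "nat \<Rightarrow> complex"
  assumes "summable (\<lambda>n. (cmod (f n))\<^sup>2)" "summable (\<lambda>n. (cmod (g n))\<^sup>2)"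
  shows "summable (\<lambda>n. norm (f n * g n))"
proof (rule summable_comparison_test[where g="\<lambda>n. ((cmod (f n))\<^sup>2 + (cmod (g n))\<^sup>2) / 2"])
  show "\<exists>N. \<forall>n\<ge>N. norm (norm (f n * g n)) \<le> ((cmod (f n))\<^sup>2 + (cmod (g n))\<^sup>2) / 2"
  proof (intro exI allI impI)
    fix n
    have "0 \<le> (cmod (f n) - cmod (g n))\<^sup>2" by simp
    then show "norm (norm (f n * g n)) \<le> ((cmod (f n))\<^sup>2 + (cmod (g n))\<^sup>2) / 2"
      by (simp add: norm_mult power2_eq_square algebra_simps)
  qed
  show "summable (\<lambda>n. ((cmod (f n))\<^sup>2 + (cmod (g n))\<^sup>2) / 2)"
    using assms by (intro summable_divide summable_add)
qed

lemma l2_inner_summable: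
  assumes "x \<in> l2" "y \<in> l2"
  shows "summable (\<lambda>n. x n * cnj (y n))"
  using assms
  by (intro summable_norm_cancel[OF summable_norm_mult_if_square_summable]) (auto simp: l2_def)

lemma l2_zero [simp]: "(\<lambda>n. 0) \<in> l2"
  by (simp add: l2_def)

lemma l2_add:
  assumes "x \<in> l2" "y \<in> l2"
  shows "(\<lambda>n. x n + y n) \<in> l2"
proof -
  have "(cmod (x n + y n))\<^sup>2 \<le> 2 * (cmod (x n))\<^sup>2 + 2 * (cmod (y n))\<^sup>2" for n
  proof -
    have "(cmod (x n + y n))\<^sup>2 \<le> (cmod (x n) + cmod (y n))\<^sup>2"
      by (intro power_mono norm_triangle_ineq) auto
    also have "\<dots> \<le> 2 * (cmod (x n))\<^sup>2 + 2 * (cmod (y n))\<^sup>2"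
      using sum_squares_ge_zero[of "cmod (x n) - cmod (y n)" 0]
      by (simp add: power2_eq_square algebra_simps)
    finally show ?thesis .
  qed
  moreover have "summable (\<lambda>n. 2 * (cmod (x n))\<^sup>2 + 2 * (cmod (y n))\<^sup>2)"
    using assms by (auto simp: l2_def intro!: summable_add summable_mult)
  ultimately show ?thesis
    unfolding l2_def by (auto intro: summable_comparison_test[where g="\<lambda>n. 2 * (cmod (x n))\<^sup>2 + 2 * (cmod (y n))\<^sup>2"])
qed

lemma l2_scale:
  assumes "x \<in> l2"
  shows "(\<lambda>n. c * x n) \<in> l2"
  using assms by (auto simp: l2_def norm_mult power_mult_distrib intro!: summable_mult)

lemma l2_diff:
  assumes "x \<in> l2" "y \<in> l2"
  shows "(\<lambda>n. x n - y n) \<in> l2"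
  using l2_add[OF assms(1) l2_scale[OF assms(2), of "-1"]] by simp

lemma l2_sum:
  assumes "finite A" "\<And>k. k \<in> A \<Longrightarrow> f k \<in> l2"
  shows "(\<lambda>n. \<Sum>k\<in>A. f k n) \<in> l2"
  using assms by (induction A rule: finite_induct) (auto intro: l2_add)

lemma l2_inner_add_left:
  assumes "a \<in> l2" "b \<in> l2" "c \<in> l2"
  shows "l2_inner (\<lambda>n. a n + b n) c = l2_inner a c + l2_inner b c"
  unfolding l2_inner_def using assms
  by (simp add: distrib_right suminf_add[symmetric] l2_inner_summable)

lemma l2_inner_scale_left:
  assumes "a \<in> l2" "c \<in> l2"
  shows "l2_inner (\<lambda>n. s * a n) c = s * l2_inner a c"
  unfolding l2_inner_def using assms
  by (simp add: mult.assoc suminf_mult l2_inner_summable)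

lemma l2_inner_commute:
  assumes "a \<in> l2" "c \<in> l2"
  shows "l2_inner c a = cnj (l2_inner a c)"
proof -
  have "(\<lambda>n. a n * cnj (c n)) sums l2_inner a c"
    unfolding l2_inner_def using l2_inner_summable[OF assms] by (rule summable_sums)
  then have "(\<lambda>n. c n * cnj (a n)) sums cnj (l2_inner a c)"
    by (subst sums_cnj[symmetric]) (simp add: mult.commute)
  then show ?thesis
    unfolding l2_inner_def by (rule sums_unique[symmetric])
qed

lemma l2_inner_add_right:
  assumes "a \<in> l2" "b \<in> l2" "c \<in> l2"
  shows "l2_inner c (\<lambda>n. a n + b n) = l2_inner c a + l2_inner c b"
  using assms by (simp add: l2_inner_commute[of _ c] l2_inner_add_left l2_add)

lemma l2_inner_scale_right:
  assumes "a \<in> l2" "c \<in> l2"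
  shows "l2_inner c (\<lambda>n. s * a n) = cnj s * l2_inner c a"
  using assms by (simp add: l2_inner_commute[of _ c] l2_inner_scale_left l2_scale)

lemma l2_inner_diff_left:
  assumes "a \<in> l2" "b \<in> l2" "c \<in> l2"
  shows "l2_inner (\<lambda>n. a n - b n) c = l2_inner a c - l2_inner b c"
  using l2_inner_add_left[OF assms(1) l2_scale[OF assms(2), of "-1"] assms(3)]
    l2_inner_scale_left[OF assms(2,3), of "-1"] by simp

lemma l2_inner_diff_right:
  assumes "a \<in> l2" "b \<in> l2" "c \<in> l2"
  shows "l2_inner c (\<lambda>n. a n - b n) = l2_inner c a - l2_inner c b"
  using assms by (simp add: l2_inner_commute[of _ c] l2_inner_diff_left l2_diff)

lemma l2_inner_sum_left:
  assumes "finite A" "\<And>k. k \<in> A \<Longrightarrow> f k \<in> l2" "c \<in> l2"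
  shows "l2_inner (\<lambda>n. \<Sum>k\<in>A. f k n) c = (\<Sum>k\<in>A. l2_inner (f k) c)"
  using assms
proof (induction A rule: finite_induct)
  case (insert x F)
  then show ?case by (simp add: l2_inner_add_left l2_sum)
qed (simp add: l2_inner_def)

lemma l2_inner_sum_right:
  assumes "finite A" "\<And>k. k \<in> A \<Longrightarrow> f k \<in> l2" "c \<in> l2"
  shows "l2_inner c (\<lambda>n. \<Sum>k\<in>A. f k n) = (\<Sum>k\<in>A. l2_inner c (f k))"
  using assms by (simp add: l2_inner_commute[of _ c] l2_inner_sum_left l2_sum)

lemma l2_inner_self:
  assumes "a \<in> l2"
  shows "l2_inner a a = of_real (\<Sum>n. (cmod (a n))\<^sup>2)"
proof -
  have "(\<lambda>n. (cmod (a n))\<^sup>2) sums (\<Sum>n. (cmod (a n))\<^sup>2)"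
    using assms by (auto simp: l2_def intro: summable_sums)
  then have "(\<lambda>n. complex_of_real ((cmod (a n))\<^sup>2)) sums of_real (\<Sum>n. (cmod (a n))\<^sup>2)"
    by (rule sums_of_real)
  then show ?thesis
    unfolding l2_inner_def complex_norm_square by (rule sums_unique[symmetric])
qed

lemma Re_l2_inner_self:
  assumes "a \<in> l2"
  shows "Re (l2_inner a a) = (\<Sum>n. (cmod (a n))\<^sup>2)"
  using assms by (simp add: l2_inner_self)

lemma l2_inner_self_nonneg:
  assumes "a \<in> l2"
  shows "0 \<le> Re (l2_inner a a)"
  using assms by (auto simp: Re_l2_inner_self l2_def intro!: suminf_nonneg)

lemma l2_pointwise_limit:
  assumes lim: "\<And>n. (\<lambda>M. f M n) \<longlonglongrightarrow> g n"
    and bounded: "\<forall>\<^sub>F M in sequentially. f M \<in> l2 \<and> (\<Sum>n. (cmod (f M n))\<^sup>2) \<le> B"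
  shows "g \<in> l2" "(\<Sum>n. (cmod (g n))\<^sup>2) \<le> B"
proof -
  have partial: "(\<Sum>n<P. (cmod (g n))\<^sup>2) \<le> B" for P
  proof (rule LIMSEQ_le_const2)
    show "(\<lambda>M. \<Sum>n<P. (cmod (f M n))\<^sup>2) \<longlonglongrightarrow> (\<Sum>n<P. (cmod (g n))\<^sup>2)"
      by (intro tendsto_intros lim)
    from bounded obtain N where "f M \<in> l2" "(\<Sum>n. (cmod (f M n))\<^sup>2) \<le> B" if "M \<ge> N" for M
      unfolding eventually_sequentially by blast
    then have "(\<Sum>n<P. (cmod (f M n))\<^sup>2) \<le> B" if "M \<ge> N" for M
      using that by (intro order_trans[OF sum_le_suminf]) (auto simp: l2_def)
    then show "\<exists>N. \<forall>M\<ge>N. (\<Sum>n<P. (cmod (f M n))\<^sup>2) \<le> B"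
      by blast
  qed
  have "summable (\<lambda>n. (cmod (g n))\<^sup>2)"
    by (rule summableI_nonneg_bounded[OF _ partial]) simp
  then show "g \<in> l2" "(\<Sum>n. (cmod (g n))\<^sup>2) \<le> B"
    using partial by (auto simp: l2_def intro: suminf_le_const)
qed

section \<open>Positive operators\<close>

text \<open>The hypotheses of the theorem without the norm bound, which the argument never needs.\<close>

definition positive_linear_op :: "((nat \<Rightarrow> complex) \<Rightarrow> (nat \<Rightarrow> complex)) \<Rightarrow> bool" where
  "positive_linear_op T \<longleftrightarrow> (\<forall>x\<in>l2. T x \<in> l2) \<and>
     (\<forall>x\<in>l2. \<forall>y\<in>l2. T (\<lambda>n. x n + y n) = (\<lambda>n. T x n + T y n)) \<and>
     (\<forall>x\<in>l2. \<forall>c. T (\<lambda>n. c * x n) = (\<lambda>n. c * T x n)) \<and>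
     positive_op T"

lemma positive_linear_opI: "bounded_op T \<Longrightarrow> positive_op T \<Longrightarrow> positive_linear_op T"
  unfolding positive_linear_op_def bounded_op_def by blast

lemma positive_linear_op_id: "positive_linear_op (\<lambda>x. x)"
  unfolding positive_linear_op_def positive_op_def
  by (auto simp: l2_inner_self l2_def intro!: suminf_nonneg)

lemma positive_linear_op_l2:
  "positive_linear_op T \<Longrightarrow> x \<in> l2 \<Longrightarrow> T x \<in> l2"
  unfolding positive_linear_op_def by blast

lemma positive_form_real:
  assumes "positive_linear_op T" "x \<in> l2"
  shows "l2_inner (T x) x = of_real (Re (l2_inner (T x) x))"
  using assms unfolding positive_linear_op_def positive_op_def by (auto simp: Reals_def)

lemma positive_form_nonneg:
  assumes "positive_linear_op T" "x \<in> l2"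
  shows "0 \<le> Re (l2_inner (T x) x)"
  using assms unfolding positive_linear_op_def positive_op_def by auto

lemma positive_form_expand:
  assumes "positive_linear_op T" "x \<in> l2" "y \<in> l2"
  shows "l2_inner (T (\<lambda>n. x n + s * y n)) (\<lambda>n. x n + s * y n) =
    l2_inner (T x) x + cnj s * l2_inner (T x) y + s * l2_inner (T y) x
      + s * cnj s * l2_inner (T y) y"
proof -
  have sy: "(\<lambda>n. s * y n) \<in> l2" using assms(3) by (rule l2_scale)
  have "T (\<lambda>n. x n + s * y n) = (\<lambda>n. T x n + s * T y n)"
    using assms sy unfolding positive_linear_op_def by auto
  then show ?thesis
    using assms sy positive_linear_op_l2[OF assms(1)]
    by (simp add: l2_inner_add_left l2_inner_add_right l2_inner_scale_left
        l2_inner_scale_right l2_add l2_scale algebra_simps)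
qed

text \<open>Polarization: the form is real on \<open>x + y\<close> and on \<open>x + \<i> y\<close>.\<close>

lemma positive_form_hermitian:
  assumes "positive_linear_op T" "x \<in> l2" "y \<in> l2"
  shows "l2_inner (T y) x = cnj (l2_inner (T x) y)"
proof -
  have Im_zero: "Im (l2_inner (T z) z) = 0" if "z \<in> l2" for z
    using positive_form_real[OF assms(1) that] by (metis Im_complex_of_real)
  have "(\<lambda>n. x n + s * y n) \<in> l2" for s
    using assms by (intro l2_add l2_scale)
  note Im_comb = Im_zero[OF this]
  have "Im (l2_inner (T x) y + l2_inner (T y) x) = 0"
    using Im_comb[of 1] positive_form_expand[OF assms, of 1] Im_zero assms(2,3) by simp
  moreover have "Re (l2_inner (T y) x) = Re (l2_inner (T x) y)"
    using Im_comb[of \<i>] positive_form_expand[OF assms, of \<i>] Im_zero assms(2,3) by simp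
  ultimately show ?thesis by (simp add: complex_eq_iff)
qed

lemma quadratic_nonneg_imp_discriminant:
  fixes a q c :: real
  assumes "\<And>t. 0 \<le> a - 2 * t * q + t\<^sup>2 * q * c" "0 \<le> q" "0 \<le> c"
  shows "q \<le> a * c"
proof (cases "c = 0")
  case True
  have "0 \<le> a - 2 * ((a + 1) / (2 * q)) * q"
    using assms(1)[of "(a + 1) / (2 * q)"] True by simp
  then show ?thesis
    using True assms(2) by (cases "q = 0") (auto simp: field_simps)
next
  case False
  then have c: "c > 0" using assms(3) by simp
  have "0 \<le> a - 2 * (1 / c) * q + (1 / c)\<^sup>2 * q * c" by (rule assms(1))
  also have "\<dots> = a - q / c" using c by (simp add: field_simps power2_eq_square)
  finally show ?thesis using c by (simp add: field_simps)
qed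

lemma positive_form_Cauchy_Schwarz:
  assumes T: "positive_linear_op T" and x: "x \<in> l2" and y: "y \<in> l2"
  shows "(cmod (l2_inner (T x) y))\<^sup>2 \<le> Re (l2_inner (T x) x) * Re (l2_inner (T y) y)"
proof (rule quadratic_nonneg_imp_discriminant)
  define b where "b = l2_inner (T x) y"
  define a where "a = Re (l2_inner (T x) x)"
  define c where "c = Re (l2_inner (T y) y)"
  define q where "q = (cmod b)\<^sup>2"
  fix t :: real
  define s where "s = - of_real t * b"
  have "(\<lambda>n. x n + s * y n) \<in> l2" using x y by (intro l2_add l2_scale)
  from positive_form_nonneg[OF T this]
  have "0 \<le> Re (of_real a + cnj s * b + s * cnj b + s * cnj s * of_real c)"
    using positive_form_expand[OF T x y, of s] positive_form_hermitian[OF T x y]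
      positive_form_real[OF T x] positive_form_real[OF T y]
    by (simp add: a_def b_def c_def)
  also have "of_real a + cnj s * b + s * cnj b + s * cnj s * of_real c
      = of_real a - 2 * of_real t * (b * cnj b) + (of_real t)\<^sup>2 * (b * cnj b) * of_real c"
    unfolding s_def by (simp add: algebra_simps power2_eq_square)
  also have "\<dots> = of_real (a - 2 * t * q + t\<^sup>2 * q * c)"
    unfolding q_def complex_norm_square[symmetric] by simp
  finally show "0 \<le> a - 2 * t * q + t\<^sup>2 * q * c"
    by simp
next
  show "0 \<le> Re (l2_inner (T y) y)" using positive_form_nonneg[OF T y] .
qed simp

lemma l2_Cauchy_Schwarz:
  assumes "x \<in> l2" "y \<in> l2"
  shows "(cmod (l2_inner x y))\<^sup>2 \<le> Re (l2_inner x x) * Re (l2_inner y y)"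
  using positive_form_Cauchy_Schwarz[OF positive_linear_op_id assms] by simp

section \<open>Orthonormal sequences\<close>

lemma l2_orthonormal_l2: "l2_orthonormal v \<Longrightarrow> v k \<in> l2"
  unfolding l2_orthonormal_def by auto

lemma l2_orthonormal_inner_self: "l2_orthonormal v \<Longrightarrow> l2_inner (v k) (v k) = 1"
  unfolding l2_orthonormal_def by auto

lemma l2_onb_orthonormal: "l2_onb u \<Longrightarrow> l2_orthonormal u"
  unfolding l2_onb_def by auto

lemma l2_orthonormal_comb_l2:
  assumes "l2_orthonormal v" "finite A"
  shows "(\<lambda>n. \<Sum>k\<in>A. c k * v k n) \<in> l2"
  using assms by (intro l2_sum l2_scale l2_orthonormal_l2)

lemma l2_inner_orthonormal_comb_left:
  assumes "l2_orthonormal v" "finite A" "b \<in> l2"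
  shows "l2_inner (\<lambda>n. \<Sum>k\<in>A. c k * v k n) b = (\<Sum>k\<in>A. c k * l2_inner (v k) b)"
  using assms by (simp add: l2_inner_sum_left l2_scale l2_orthonormal_l2 l2_inner_scale_left)

lemma l2_inner_orthonormal_comb_right:
  assumes "l2_orthonormal v" "finite A" "b \<in> l2"
  shows "l2_inner b (\<lambda>n. \<Sum>k\<in>A. c k * v k n) = (\<Sum>k\<in>A. cnj (c k) * l2_inner b (v k))"
  using assms by (simp add: l2_inner_sum_right l2_scale l2_orthonormal_l2 l2_inner_scale_right)

lemma l2_inner_orthonormal_comb_basis:
  assumes "l2_orthonormal v" "finite A"
  shows "l2_inner (\<lambda>n. \<Sum>k\<in>A. c k * v k n) (v j) = (if j \<in> A then c j else 0)"
proof -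
  have "l2_inner (\<lambda>n. \<Sum>k\<in>A. c k * v k n) (v j) = (\<Sum>k\<in>A. c k * l2_inner (v k) (v j))"
    using assms l2_orthonormal_l2[OF assms(1)] by (simp add: l2_inner_orthonormal_comb_left)
  also have "\<dots> = (\<Sum>k\<in>A. if k = j then c k else 0)"
    using assms(1) by (intro sum.cong) (auto simp: l2_orthonormal_def)
  finally show ?thesis
    using assms(2) by simp
qed

lemma l2_inner_orthonormal_comb_self:
  assumes "l2_orthonormal v" "finite A"
  shows "l2_inner (\<lambda>n. \<Sum>k\<in>A. c k * v k n) (\<lambda>n. \<Sum>k\<in>A. c k * v k n)
     = of_real (\<Sum>k\<in>A. (cmod (c k))\<^sup>2)"
proof -
  let ?w = "\<lambda>n. \<Sum>k\<in>A. c k * v k n"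
  have "l2_inner (v j) ?w = cnj (c j)" if "j \<in> A" for j
    using l2_inner_commute[OF l2_orthonormal_comb_l2[OF assms] l2_orthonormal_l2[OF assms(1)]]
      l2_inner_orthonormal_comb_basis[OF assms] that by simp
  then have "l2_inner ?w ?w = (\<Sum>k\<in>A. c k * cnj (c k))"
    using assms by (simp add: l2_inner_orthonormal_comb_left l2_orthonormal_comb_l2)
  then show ?thesis
    by (simp only: of_real_sum complex_norm_square)
qed

lemma Bessel_inequality_finite:
  assumes "l2_orthonormal v" "finite A" "b \<in> l2"
  shows "(\<Sum>k\<in>A. (cmod (l2_inner b (v k)))\<^sup>2) \<le> Re (l2_inner b b)"
proof -
  define c where "c k = l2_inner b (v k)" for k
  define w where "w n = (\<Sum>k\<in>A. c k * v k n)" for n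
  define S where "S = (\<Sum>k\<in>A. (cmod (c k))\<^sup>2)"
  have w: "w \<in> l2"
    unfolding w_def using assms by (intro l2_orthonormal_comb_l2)
  have ww: "l2_inner w w = of_real S"
    unfolding w_def S_def using l2_inner_orthonormal_comb_self[OF assms(1,2)] by simp
  have "l2_inner b w = (\<Sum>k\<in>A. c k * cnj (c k))"
    unfolding w_def using assms
    by (simp add: l2_inner_orthonormal_comb_right c_def[symmetric] mult.commute)
  also have "\<dots> = of_real S"
    unfolding S_def by (simp only: of_real_sum complex_norm_square)
  finally have bw: "l2_inner b w = of_real S" .
  have "0 \<le> Re (l2_inner (\<lambda>n. b n - w n) (\<lambda>n. b n - w n))"
    using l2_inner_self_nonneg[OF l2_diff[OF assms(3) w]] .
  also have "l2_inner (\<lambda>n. b n - w n) (\<lambda>n. b n - w n) = l2_inner b b - of_real S"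
    using assms(3) w l2_inner_commute[OF assms(3) w]
    by (simp add: l2_inner_diff_left l2_inner_diff_right l2_diff ww bw)
  finally show ?thesis
    unfolding S_def c_def by simp
qed

lemma Bessel_inequality:
  assumes "l2_orthonormal v" "b \<in> l2"
  shows "summable (\<lambda>k. (cmod (l2_inner b (v k)))\<^sup>2)"
    and "(\<Sum>k. (cmod (l2_inner b (v k)))\<^sup>2) \<le> Re (l2_inner b b)"
proof -
  have partial: "(\<Sum>k<n. (cmod (l2_inner b (v k)))\<^sup>2) \<le> Re (l2_inner b b)" for n
    using Bessel_inequality_finite[OF assms(1) _ assms(2)] by simp
  show "summable (\<lambda>k. (cmod (l2_inner b (v k)))\<^sup>2)"
    by (rule summableI_nonneg_bounded[OF _ partial]) simp
  then show "(\<Sum>k. (cmod (l2_inner b (v k)))\<^sup>2) \<le> Re (l2_inner b b)"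
    using partial by (rule suminf_le_const)
qed

lemma l2_orthonormal_weakly_null:
  assumes "l2_orthonormal v" "b \<in> l2"
  shows "(\<lambda>k. l2_inner (v k) b) \<longlonglongrightarrow> 0"
proof -
  have "(\<lambda>k. (cmod (l2_inner b (v k)))\<^sup>2) \<longlonglongrightarrow> 0"
    using Bessel_inequality(1)[OF assms] by (rule summable_LIMSEQ_zero)
  then have "(\<lambda>k. sqrt ((cmod (l2_inner b (v k)))\<^sup>2)) \<longlonglongrightarrow> sqrt 0"
    by (rule tendsto_real_sqrt)
  then have "(\<lambda>k. cmod (l2_inner (v k) b)) \<longlonglongrightarrow> 0"
    using l2_inner_commute[OF assms(2) l2_orthonormal_l2[OF assms(1)]] by simp
  then show ?thesis
    by (rule tendsto_norm_zero_cancel)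
qed

definition unit_vector :: "nat \<Rightarrow> nat \<Rightarrow> complex" where
  "unit_vector n = (\<lambda>m. if m = n then 1 else 0)"

lemma unit_vector_l2: "unit_vector n \<in> l2"
proof -
  have "(\<lambda>m. (cmod (unit_vector n m))\<^sup>2) = (\<lambda>m. if m = n then 1 else 0)"
    by (auto simp: unit_vector_def)
  then show ?thesis
    unfolding l2_def using sums_summable[OF sums_single[of n "\<lambda>_. 1::real"]] by simp
qed

lemma l2_inner_unit_vector: "l2_inner (unit_vector n) v = cnj (v n)"
proof -
  have "(\<lambda>m. unit_vector n m * cnj (v m)) = (\<lambda>m. if m = n then cnj (v m) else 0)"
    by (auto simp: unit_vector_def)
  then show ?thesis
    unfolding l2_inner_def using sums_unique[OF sums_single[of n "\<lambda>m. cnj (v m)"]] by simp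
qed

lemma l2_orthonormal_coordinate_summable:
  assumes "l2_orthonormal v"
  shows "summable (\<lambda>k. (cmod (v k n))\<^sup>2)"
  using Bessel_inequality(1)[OF assms unit_vector_l2[of n]] by (simp add: l2_inner_unit_vector)

section \<open>Expansion in an orthonormal basis\<close>

lemma sum_atLeastLessThan_le_suminf_diff:
  fixes f :: "nat \<Rightarrow> real"
  assumes "summable f" "\<And>k. 0 \<le> f k" "N \<le> M"
  shows "(\<Sum>k\<in>{N..<M}. f k) \<le> suminf f - (\<Sum>k<N. f k)"
proof -
  have "(\<Sum>k<N. f k) + (\<Sum>k\<in>{N..<M}. f k) = (\<Sum>k<M. f k)"
    using assms(3) by (simp add: lessThan_atLeast0 sum.atLeastLessThan_concat)
  moreover have "(\<Sum>k<M. f k) \<le> suminf f"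
    using assms by (intro sum_le_suminf) auto
  ultimately show ?thesis by simp
qed

lemma suminf_minus_partial_sum_tendsto_zero:
  fixes f :: "nat \<Rightarrow> real"
  assumes "summable f"
  shows "(\<lambda>N. suminf f - (\<Sum>k<N. f k)) \<longlonglongrightarrow> 0"
  using tendsto_diff[OF tendsto_const summable_LIMSEQ[OF assms], of "suminf f"] by simp

lemma l2_orthonormal_series_remainder:
  fixes c :: "nat \<Rightarrow> complex" and L :: nat
  assumes v: "l2_orthonormal v" and c: "summable (\<lambda>k. (cmod (c k))\<^sup>2)"
  defines "r \<equiv> \<lambda>n. (\<Sum>k. c k * v k n) - (\<Sum>k<L. c k * v k n)"
  shows "r \<in> l2"
    and "Re (l2_inner r r) \<le> (\<Sum>k. (cmod (c k))\<^sup>2) - (\<Sum>k<L. (cmod (c k))\<^sup>2)"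
proof -
  define f where "f M n = (\<Sum>k<M. c k * v k n) - (\<Sum>k<L. c k * v k n)" for M n
  have "summable (\<lambda>k. c k * v k n)" for n
    using summable_norm_mult_if_square_summable[OF c l2_orthonormal_coordinate_summable[OF v]]
    by (rule summable_norm_cancel)
  then have lim: "(\<lambda>M. f M n) \<longlonglongrightarrow> r n" for n
    unfolding f_def r_def by (intro tendsto_diff tendsto_const summable_LIMSEQ)
  have "f M \<in> l2 \<and> (\<Sum>n. (cmod (f M n))\<^sup>2) \<le> (\<Sum>k. (cmod (c k))\<^sup>2) - (\<Sum>k<L. (cmod (c k))\<^sup>2)"
    if "L \<le> M" for M
  proof -
    have block: "f M = (\<lambda>n. \<Sum>k\<in>{L..<M}. c k * v k n)"
      unfolding f_def using that by (simp add: lessThan_atLeast0 sum_diff_nat_ivl)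
    have "(\<Sum>n. (cmod (f M n))\<^sup>2) = (\<Sum>k\<in>{L..<M}. (cmod (c k))\<^sup>2)"
      using Re_l2_inner_self[OF l2_orthonormal_comb_l2[OF v]]
        l2_inner_orthonormal_comb_self[OF v] by (simp add: block)
    also have "\<dots> \<le> (\<Sum>k. (cmod (c k))\<^sup>2) - (\<Sum>k<L. (cmod (c k))\<^sup>2)"
      using c that by (intro sum_atLeastLessThan_le_suminf_diff) auto
    finally show ?thesis
      using l2_orthonormal_comb_l2[OF v] by (simp add: block)
  qed
  then have "\<forall>\<^sub>F M in sequentially.
      f M \<in> l2 \<and> (\<Sum>n. (cmod (f M n))\<^sup>2) \<le> (\<Sum>k. (cmod (c k))\<^sup>2) - (\<Sum>k<L. (cmod (c k))\<^sup>2)"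
    unfolding eventually_sequentially by blast
  from l2_pointwise_limit[OF lim this]
  show "r \<in> l2" "Re (l2_inner r r) \<le> (\<Sum>k. (cmod (c k))\<^sup>2) - (\<Sum>k<L. (cmod (c k))\<^sup>2)"
    by (simp_all add: Re_l2_inner_self)
qed

lemma l2_orthonormal_series_l2:
  assumes "l2_orthonormal v" "summable (\<lambda>k. (cmod (c k))\<^sup>2)"
  shows "(\<lambda>n. \<Sum>k. c k * v k n) \<in> l2"
  using l2_orthonormal_series_remainder(1)[OF assms, of 0] by simp

lemma l2_inner_orthonormal_series_basis:
  assumes v: "l2_orthonormal v" and c: "summable (\<lambda>k. (cmod (c k))\<^sup>2)"
  shows "l2_inner (\<lambda>n. \<Sum>k. c k * v k n) (v j) = c j"
proof -
  define y where "y n = (\<Sum>k. c k * v k n)" for n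
  define tail where "tail L = (\<Sum>k. (cmod (c k))\<^sup>2) - (\<Sum>k<L. (cmod (c k))\<^sup>2)" for L
  have "(cmod (l2_inner y (v j) - c j))\<^sup>2 \<le> tail L" if "j < L" for L
  proof -
    define s where "s n = (\<Sum>k<L. c k * v k n)" for n
    define r where "r n = y n - s n" for n
    have r: "r \<in> l2" "Re (l2_inner r r) \<le> tail L"
      using l2_orthonormal_series_remainder[OF v c, of L]
      unfolding r_def y_def s_def tail_def by simp_all
    have s: "s \<in> l2" "l2_inner s (v j) = c j"
      unfolding s_def using l2_orthonormal_comb_l2[OF v] l2_inner_orthonormal_comb_basis[OF v] that
      by auto
    have "y = (\<lambda>n. r n + s n)"
      unfolding r_def by simp
    then have "l2_inner y (v j) - c j = l2_inner r (v j)"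
      using l2_inner_add_left[OF r(1) s(1) l2_orthonormal_l2[OF v]] s(2) by simp
    moreover have "(cmod (l2_inner r (v j)))\<^sup>2 \<le> Re (l2_inner r r)"
      using l2_Cauchy_Schwarz[OF r(1) l2_orthonormal_l2[OF v]]
        l2_orthonormal_inner_self[OF v] by simp
    ultimately show ?thesis
      using r(2) by simp
  qed
  then have "(cmod (l2_inner y (v j) - c j))\<^sup>2 \<le> 0"
    using suminf_minus_partial_sum_tendsto_zero[OF c] unfolding tail_def[symmetric]
    by (intro LIMSEQ_le_const) (auto intro!: exI[of _ "Suc j"])
  then show ?thesis
    unfolding y_def by simp
qed

lemma l2_onb_expansion:
  assumes u: "l2_onb u" and b: "b \<in> l2"
  shows "b = (\<lambda>n. \<Sum>k. l2_inner b (u k) * u k n)"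
proof -
  have v: "l2_orthonormal u"
    using u by (rule l2_onb_orthonormal)
  define y where "y n = (\<Sum>k. l2_inner b (u k) * u k n)" for n
  have c: "summable (\<lambda>k. (cmod (l2_inner b (u k)))\<^sup>2)"
    using Bessel_inequality(1)[OF v b] .
  have y: "y \<in> l2"
    unfolding y_def using l2_orthonormal_series_l2[OF v c] .
  have "l2_inner y (u k) = l2_inner b (u k)" for k
    unfolding y_def by (rule l2_inner_orthonormal_series_basis[OF v c])
  then have "l2_inner (\<lambda>n. b n - y n) (u k) = 0" for k
    using b y l2_orthonormal_l2[OF v] by (simp add: l2_inner_diff_left)
  then have "(\<lambda>n. b n - y n) = (\<lambda>n. 0)"
    using u l2_diff[OF b y] unfolding l2_onb_def by blast
  then show ?thesis
    unfolding y_def by (metis eq_iff_diff_eq_0)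
qed

lemma Parseval_identity:
  assumes u: "l2_onb u" and a: "a \<in> l2" and b: "b \<in> l2"
  shows "(\<lambda>L. \<Sum>k<L. l2_inner a (u k) * cnj (l2_inner b (u k))) \<longlonglongrightarrow> l2_inner a b"
proof -
  have v: "l2_orthonormal u"
    using u by (rule l2_onb_orthonormal)
  define c where "c k = l2_inner b (u k)" for k
  define tail where "tail L = (\<Sum>k. (cmod (c k))\<^sup>2) - (\<Sum>k<L. (cmod (c k))\<^sup>2)" for L
  have csum: "summable (\<lambda>k. (cmod (c k))\<^sup>2)"
    unfolding c_def using Bessel_inequality(1)[OF v b] .
  have "b = (\<lambda>n. \<Sum>k. c k * u k n)"
    unfolding c_def by (rule l2_onb_expansion[OF u b])
  then have expansion: "(\<Sum>k. c k * u k n) = b n" for n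
    by metis
  have bound: "cmod (l2_inner a b - (\<Sum>k<L. l2_inner a (u k) * cnj (c k)))
      \<le> sqrt (Re (l2_inner a a) * tail L)" for L
  proof -
    define s where "s n = (\<Sum>k<L. c k * u k n)" for n
    define r where "r n = b n - s n" for n
    have r: "r \<in> l2" "Re (l2_inner r r) \<le> tail L"
      using l2_orthonormal_series_remainder[OF v csum, of L]
      unfolding r_def s_def tail_def expansion by simp_all
    have s: "s \<in> l2"
      unfolding s_def using l2_orthonormal_comb_l2[OF v] by simp
    have "l2_inner a s = (\<Sum>k<L. l2_inner a (u k) * cnj (c k))"
      unfolding s_def using v a by (simp add: l2_inner_orthonormal_comb_right mult.commute)
    then have "l2_inner a b - (\<Sum>k<L. l2_inner a (u k) * cnj (c k)) = l2_inner a r"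
      unfolding r_def using l2_inner_diff_right[OF b s a] by simp
    moreover have "(cmod (l2_inner a r))\<^sup>2 \<le> Re (l2_inner a a) * tail L"
      using l2_Cauchy_Schwarz[OF a r(1)] r(2) l2_inner_self_nonneg[OF a]
      by (meson mult_left_mono order_trans)
    ultimately show ?thesis
      by (simp add: real_le_rsqrt)
  qed
  have "(\<lambda>L. sqrt (Re (l2_inner a a) * tail L)) \<longlonglongrightarrow> 0"
    using tendsto_real_sqrt[OF tendsto_mult_right_zero[OF
          suminf_minus_partial_sum_tendsto_zero[OF csum]], of "Re (l2_inner a a)"]
    unfolding tail_def by simp
  then have "(\<lambda>L. l2_inner a b - (\<Sum>k<L. l2_inner a (u k) * cnj (c k))) \<longlonglongrightarrow> 0"
    by (rule Lim_null_comparison[OF always_eventually, rotated]) (use bound in auto)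
  from tendsto_diff[OF tendsto_const this, of "l2_inner a b"]
  show ?thesis
    unfolding c_def by simp
qed

section \<open>Positive operators with summable diagonal\<close>

lemma mult_le_weighted_squares:
  fixes p q X d :: real
  assumes "0 < d" "p\<^sup>2 \<le> X"
  shows "p * q \<le> X / (2 * d) + d / 2 * q\<^sup>2"
proof -
  have "0 \<le> (p - d * q)\<^sup>2" by simp
  then have "2 * d * (p * q) \<le> X + d\<^sup>2 * q\<^sup>2"
    using assms(2) by (simp add: power2_eq_square algebra_simps)
  then show ?thesis
    using assms(1) by (simp add: field_simps power2_eq_square)
qed

lemma positive_form_le_diagonal_estimate:
  assumes T: "positive_linear_op T" and u: "l2_onb u"
    and diag: "\<And>k. l2_inner (T (u k)) (u k) = of_real (lam k)"
    and lam: "summable lam" "\<And>k. 0 \<le> lam k"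
    and x: "x \<in> l2" "Re (l2_inner x x) \<le> 1"
    and K: "Re (l2_inner (T x) x) \<le> K" and d: "0 < d"
  shows "cmod (l2_inner (T x) x) \<le> (\<Sum>k<N. sqrt (K * lam k) * cmod (l2_inner x (u k)))
           + K * (suminf lam - (\<Sum>k<N. lam k)) / (2 * d) + d / 2"
    (is "_ \<le> ?head + ?tail + _")
proof -
  have v: "l2_orthonormal u"
    using u by (rule l2_onb_orthonormal)
  define g where "g k = cmod (l2_inner (T x) (u k)) * cmod (l2_inner x (u k))" for k
  have K_nonneg: "0 \<le> K"
    using positive_form_nonneg[OF T x(1)] K by simp
  have off_diagonal: "(cmod (l2_inner (T x) (u k)))\<^sup>2 \<le> K * lam k" for k
  proof -
    have "(cmod (l2_inner (T x) (u k)))\<^sup>2 \<le> Re (l2_inner (T x) x) * lam k"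
      using positive_form_Cauchy_Schwarz[OF T x(1) l2_orthonormal_l2[OF v, of k]] diag[of k]
      by simp
    also have "\<dots> \<le> K * lam k"
      using K lam(2) by (rule mult_right_mono)
    finally show ?thesis .
  qed
  have "norm (\<Sum>k<M. l2_inner (T x) (u k) * cnj (l2_inner x (u k))) \<le> ?head + ?tail + d / 2"
    if "N \<le> M" for M
  proof -
    have "(\<Sum>k<N. g k) \<le> ?head"
      unfolding g_def using off_diagonal
      by (intro sum_mono mult_right_mono real_le_rsqrt) auto
    moreover have "(\<Sum>k\<in>{N..<M}. g k)
        \<le> K / (2 * d) * (\<Sum>k\<in>{N..<M}. lam k) + d / 2 * (\<Sum>k\<in>{N..<M}. (cmod (l2_inner x (u k)))\<^sup>2)"
      unfolding g_def sum_distrib_left sum.distrib[symmetric]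
      using mult_le_weighted_squares[OF d off_diagonal] by (intro sum_mono) simp
    moreover have "K / (2 * d) * (\<Sum>k\<in>{N..<M}. lam k) \<le> ?tail"
      using sum_atLeastLessThan_le_suminf_diff[OF lam that] K_nonneg d
      by (simp add: mult_left_mono divide_right_mono)
    moreover have "d / 2 * (\<Sum>k\<in>{N..<M}. (cmod (l2_inner x (u k)))\<^sup>2) \<le> d / 2"
      using Bessel_inequality_finite[OF v _ x(1), of "{N..<M}"] x(2) d by simp
    moreover have "(\<Sum>k<M. g k) = (\<Sum>k<N. g k) + (\<Sum>k\<in>{N..<M}. g k)"
      using that by (simp add: lessThan_atLeast0 sum.atLeastLessThan_concat)
    moreover have "norm (\<Sum>k<M. l2_inner (T x) (u k) * cnj (l2_inner x (u k))) \<le> (\<Sum>k<M. g k)"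
      unfolding g_def by (rule order_trans[OF norm_sum]) (simp add: norm_mult)
    ultimately show ?thesis
      by linarith
  qed
  then show ?thesis
    by (intro LIMSEQ_le_const2[OF tendsto_norm[OF Parseval_identity[OF u
            positive_linear_op_l2[OF T x(1)] x(1)]]]) auto
qed

lemma ess_num_range_nonneg:
  assumes T: "positive_linear_op T" and z: "z \<in> ess_num_range T"
  shows "0 \<le> Re z"
proof -
  obtain x where x: "l2_orthonormal x" "(\<lambda>n. l2_inner (T (x n)) (x n)) \<longlonglongrightarrow> z"
    using z unfolding ess_num_range_def by auto
  show ?thesis
    using positive_form_nonneg[OF T l2_orthonormal_l2[OF x(1)]]
    by (intro LIMSEQ_le_const[OF tendsto_Re[OF x(2)]]) auto
qed

lemma ess_num_range_subset_zero_if_summable_diagonal: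
  assumes T: "positive_linear_op T" and u: "l2_onb u"
    and diag: "\<And>k. l2_inner (T (u k)) (u k) = of_real (lam k)"
    and summable: "summable lam"
  shows "ess_num_range T \<subseteq> {0}"
proof
  fix z assume "z \<in> ess_num_range T"
  then obtain x where x: "l2_orthonormal x" and lim: "(\<lambda>n. l2_inner (T (x n)) (x n)) \<longlonglongrightarrow> z"
    unfolding ess_num_range_def by auto
  have xl2: "x n \<in> l2" for n
    using x by (rule l2_orthonormal_l2)
  have lam_nonneg: "0 \<le> lam k" for k
    using positive_form_nonneg[OF T l2_orthonormal_l2[OF l2_onb_orthonormal[OF u]]] diag by simp
  obtain K where K: "\<And>n. cmod (l2_inner (T (x n)) (x n)) \<le> K"
    using convergent_imp_Bseq[OF convergentI[OF lim]] unfolding Bseq_def by blast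
  define tail where "tail N = suminf lam - (\<Sum>k<N. lam k)" for N
  have estimate: "cmod z \<le> K * tail N / (2 * d) + d / 2" if d: "0 < d" for N d
  proof (rule LIMSEQ_le[OF tendsto_norm[OF lim]])
    have "(\<lambda>n. l2_inner (x n) (u k)) \<longlonglongrightarrow> 0" for k
      using l2_orthonormal_weakly_null[OF x l2_orthonormal_l2[OF l2_onb_orthonormal[OF u]]] .
    then have "(\<lambda>n. (\<Sum>k<N. sqrt (K * lam k) * cmod (l2_inner (x n) (u k)))
        + K * tail N / (2 * d) + d / 2) \<longlonglongrightarrow> (\<Sum>k<N. sqrt (K * lam k) * cmod 0)
        + K * tail N / (2 * d) + d / 2"
      by (intro tendsto_intros)
    then show "(\<lambda>n. (\<Sum>k<N. sqrt (K * lam k) * cmod (l2_inner (x n) (u k)))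
        + K * tail N / (2 * d) + d / 2) \<longlonglongrightarrow> K * tail N / (2 * d) + d / 2"
      by simp
    have "Re (l2_inner (T (x n)) (x n)) \<le> K" for n
      using complex_Re_le_cmod K order_trans by blast
    then show "\<exists>M. \<forall>n\<ge>M. cmod (l2_inner (T (x n)) (x n))
        \<le> (\<Sum>k<N. sqrt (K * lam k) * cmod (l2_inner (x n) (u k))) + K * tail N / (2 * d) + d / 2"
      using positive_form_le_diagonal_estimate[OF T u diag summable lam_nonneg xl2 _ _ d]
        l2_orthonormal_inner_self[OF x] unfolding tail_def by auto
  qed
  have "cmod z \<le> d" if d: "0 < d" for d
  proof -
    have "(\<lambda>N. K * tail N / (2 * d) + d / 2) \<longlonglongrightarrow> K * 0 / (2 * d) + d / 2"
      unfolding tail_def using d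
      by (intro tendsto_intros suminf_minus_partial_sum_tendsto_zero summable) auto
    then have "(\<lambda>N. K * tail N / (2 * d) + d / 2) \<longlonglongrightarrow> d / 2"
      by simp
    then have "cmod z \<le> d / 2"
      by (rule LIMSEQ_le_const) (use estimate d in auto)
    then show ?thesis
      using d by simp
  qed
  then have "cmod z \<le> 0"
    using field_le_epsilon[of "cmod z" 0] by simp
  then show "z \<in> {0}"
    by simp
qed

lemma filterlim_partial_sums_at_top:
  fixes f :: "nat \<Rightarrow> real"
  assumes "\<And>k. 0 \<le> f k" "\<not> summable f"
  shows "filterlim (\<lambda>n. \<Sum>k<n. f k) at_top sequentially"
  unfolding filterlim_at_top eventually_sequentially
proof
  fix Z
  have "\<not> (\<forall>n. (\<Sum>k<n. f k) \<le> Z)"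
    using summableI_nonneg_bounded[of f Z] assms by blast
  then obtain n0 where n0: "Z \<le> (\<Sum>k<n0. f k)"
    by (auto simp: not_le intro: less_imp_le)
  have "(\<Sum>k<n0. f k) \<le> (\<Sum>k<n. f k)" if "n0 \<le> n" for n
    using assms(1) that by (intro sum_mono2) auto
  then show "\<exists>N. \<forall>n\<ge>N. Z \<le> (\<Sum>k<n. f k)"
    using n0 order_trans by blast
qed

theorem proposition4p6:
  fixes T :: "(nat \<Rightarrow> complex) \<Rightarrow> (nat \<Rightarrow> complex)"
    and lam :: "nat \<Rightarrow> real"
  assumes "bounded_op T"
    and "positive_op T"
    and "\<And>k. lam k \<in> interior {r::real. complex_of_real r \<in> ess_num_range T}"
    and "(\<lambda>k. complex_of_real (lam k)) \<in> diagonals T"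
  shows "filterlim (\<lambda>n. \<Sum>k<n. lam k) at_top sequentially"
proof -
  have T: "positive_linear_op T"
    using assms(1,2) by (rule positive_linear_opI)
  obtain u where u: "l2_onb u"
    and diagonal: "(\<lambda>k. complex_of_real (lam k)) = (\<lambda>k. l2_inner (T (u k)) (u k))"
    using assms(4) unfolding diagonals_def by blast
  have diag: "l2_inner (T (u k)) (u k) = of_real (lam k)" for k
    using fun_cong[OF diagonal, of k] by simp
  have "{r::real. complex_of_real r \<in> ess_num_range T} \<subseteq> {0..}"
    using ess_num_range_nonneg[OF T] by force
  then have "lam k \<in> interior {0..}" for k
    using assms(3)[of k] interior_mono by blast
  then have lam_pos: "0 < lam k" for k
    by (simp add: interior_real_atLeast)
  have "\<not> summable lam"
  proof
    assume "summable lam"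
    then have "complex_of_real (lam 0) \<in> {0}"
      using ess_num_range_subset_zero_if_summable_diagonal[OF T u diag] assms(3)[of 0]
        interior_subset by blast
    with lam_pos[of 0] show False
      by simp
  qed
  then show ?thesis
    by (intro filterlim_partial_sums_at_top) (simp_all add: less_imp_le lam_pos)
qed

end
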